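(* Let $\varphi$ be a Schwarz-type function, let $F\in\mathcal{P}$, and let $\omega$ be the Schwarz-type function with $F=\ell\circ\omega$. Then the following are equivalent: (a) $T_{F,\varphi}(f)\in\mathcal{P}$ for every $f\in\mathcal{P}$; (b) $T_{F,\varphi}(\ell_\lambda)\in\mathcal{P}$ for every $\lambda$ with $|\lambda|=1$; (c) for all $z\in\mathbb{D}$, $$4|\varphi(z)|\,|\mathrm{Im}\,\omega(z)|<(1-|\omega(z)|^2)(1-|\varphi(z)|^2),$$ equivalently, for all $z\in\mathbb{D}$, $$2|\varphi(z)|\left|\frac{\mathrm{Im}\,F(z)}{\mathrm{Re}\,F(z)}\right|<1-|\varphi(z)|^2;$$ (d) for all $z\in\mathbb{D}$, $$|\arg F(z)|<\frac{\pi}{2}-\arcsin\frac{2|\varphi(z)|}{1+|\varphi(z)|^2}.$$ Moreover, $\frac{\pi}{2}-\arcsin\frac{2|\varphi(z)|}{1+|\varphi(z)|^2}=\frac{\pi}{2}-\arctan\frac{2|\varphi(z)|}{1-|\varphi(z)|^2}=\arctan\frac{1-|\varphi(z)|^2}{2|\varphi(z)|}$, where for $\varphi(z)=0$ the last expression is understood as $\arctan(+\infty)=\pi/2$.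
   Context: $\mathbb{D}$ is the open unit disk. $\mathcal{P}$ is the set of analytic $f$ on $\mathbb{D}$ with $\mathrm{Re}\,f>0$ and $f(0)=1$. A Schwarz-type function is an analytic $\varphi:\mathbb{D}\to\mathbb{D}$ with $\varphi(0)=0$. $\ell(z)=\frac{1+z}{1-z}$ and, for $|\lambda|=1$, $\ell_\lambda(z)=\frac{1+\lambda z}{1-\lambda z}$. $T_{F,\varphi}(f)=F\cdot(f\circ\varphi)$. $\arg$ denotes the principal branch of the argument with values in $(-\pi,\pi]$. *)

theory Defs
  imports "HOL-Analysis.Analysis"
begin

definition carath_class :: "(complex \<Rightarrow> complex) set" where
  "carath_class = {f. f holomorphic_on ball 0 1 \<and> (\<forall>z\<in>ball 0 1. Re (f z) > 0) \<and> f 0 = 1}"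

definition schwarz_type :: "(complex \<Rightarrow> complex) \<Rightarrow> bool" where
  "schwarz_type \<phi> \<longleftrightarrow> \<phi> holomorphic_on ball 0 1 \<and> \<phi> ` ball 0 1 \<subseteq> ball 0 1 \<and> \<phi> 0 = 0"

definition ell :: "complex \<Rightarrow> complex" where
  "ell z = (1 + z) / (1 - z)"

definition ell_lam :: "complex \<Rightarrow> complex \<Rightarrow> complex" where
  "ell_lam lam z = (1 + lam * z) / (1 - lam * z)"

definition T_op :: "(complex \<Rightarrow> complex) \<Rightarrow> (complex \<Rightarrow> complex) \<Rightarrow> (complex \<Rightarrow> complex) \<Rightarrow> (complex \<Rightarrow> complex)" where
  "T_op F \<phi> f = (\<lambda>z. F z * f (\<phi> z))"

end

theory Submission
  imports Defs "HOL-Complex_Analysis.Complex_Analysis"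
begin

text \<open>
  Writing \<open>f \<in> \<P>\<close> as \<open>\<ell> \<circ> g\<close> with \<open>g\<close> its Cayley transform, a Schwarz-type function, the
  Schwarz lemma shows that \<open>f (\<phi> z) = \<ell> u\<close> for some \<open>|u| \<le> |\<phi> z|\<close>, while the rotations \<open>\<ell>\<^sub>\<lambda>\<close>
  realise every \<open>u\<close> with \<open>|u| = |\<phi> z|\<close>. By the identity
  \<open>Re (\<ell> w \<cdot> \<ell> u) \<cdot> |1 - w|\<^sup>2 |1 - u|\<^sup>2 = (1 - |w|\<^sup>2)(1 - |u|\<^sup>2) - 4 Im w Im u\<close>
  the worst case over \<open>|u| \<le> r\<close> is \<open>u = \<plusminus>i r\<close>, so positivity of \<open>Re (F \<cdot> f \<circ> \<phi>)\<close> for all \<open>f\<close>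
  amounts to condition (c). Conditions (c') and (d) rewrite (c) via
  \<open>Im F / Re F = 2 Im \<omega> / (1 - |\<omega>|\<^sup>2)\<close> and \<open>|Arg F| = arctan |Im F / Re F|\<close>.
\<close>

lemma Re_ell: "w \<noteq> 1 \<Longrightarrow> Re (ell w) = (1 - (cmod w)\<^sup>2) / (cmod (1 - w))\<^sup>2"
  and Im_ell: "w \<noteq> 1 \<Longrightarrow> Im (ell w) = 2 * Im w / (cmod (1 - w))\<^sup>2"
  unfolding ell_def Re_divide Im_divide cmod_power2
  by (simp_all add: field_simps power2_eq_square)

lemma Im_div_Re_ell:
  assumes "cmod w < 1"
  shows "Im (ell w) / Re (ell w) = 2 * Im w / (1 - (cmod w)\<^sup>2)"
proof -
  have "(cmod w)\<^sup>2 < 1" using assms by (simp add: power_less_one_iff)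
  moreover have "w \<noteq> 1" using assms by auto
  ultimately show ?thesis by (simp add: Re_ell Im_ell)
qed

lemma Re_ell_mult_ell_pos_iff:
  assumes "cmod w < 1" "cmod u < 1"
  shows "Re (ell w * ell u) > 0 \<longleftrightarrow> 4 * Im w * Im u < (1 - (cmod w)\<^sup>2) * (1 - (cmod u)\<^sup>2)"
proof -
  have "w \<noteq> 1" "u \<noteq> 1" using assms by auto
  then have den: "(cmod (1 - w))\<^sup>2 * (cmod (1 - u))\<^sup>2 > 0" by simp
  have "Re (ell w * ell u) = ((1 - (cmod w)\<^sup>2) * (1 - (cmod u)\<^sup>2) - 4 * Im w * Im u)
          / ((cmod (1 - w))\<^sup>2 * (cmod (1 - u))\<^sup>2)"
    using \<open>w \<noteq> 1\<close> \<open>u \<noteq> 1\<close> den by (simp add: Re_ell Im_ell field_simps)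
  with den show ?thesis by (simp add: zero_less_divide_iff)
qed

lemma Re_ell_pos: "cmod w < 1 \<Longrightarrow> Re (ell w) > 0"
  using Re_ell_mult_ell_pos_iff[of w 0] by (simp add: ell_def power_less_one_iff)

lemma ell_lam_eq_ell: "ell_lam lam z = ell (lam * z)"
  by (simp add: ell_lam_def ell_def)

lemma ell_lam_in_carath_class:
  assumes "cmod lam = 1"
  shows "ell_lam lam \<in> carath_class"
proof -
  have lt1: "cmod (lam * z) < 1" if "z \<in> ball 0 1" for z
    using that assms by (simp add: norm_mult)
  then have "1 - lam * z \<noteq> 0" if "z \<in> ball 0 1" for z
    using that by fastforce
  then have "ell_lam lam holomorphic_on ball 0 1"
    unfolding ell_lam_def by (intro holomorphic_intros) auto
  with lt1 show ?thesis
    by (simp add: carath_class_def ell_lam_eq_ell Re_ell_pos)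
      (simp add: ell_def)
qed

lemma carath_class_obtain_ell_norm_le:
  assumes f: "f \<in> carath_class" and z: "cmod z < 1"
  obtains u where "cmod u \<le> cmod z" "f z = ell u"
proof -
  define g where "g = (\<lambda>z. (f z - 1) / (f z + 1))"
  have Re: "Re (f x) > 0" if "cmod x < 1" for x using f that by (simp add: carath_class_def)
  have nz: "f x + 1 \<noteq> 0" if "cmod x < 1" for x
    using Re[OF that] by (metis less_add_same_cancel2 plus_complex.sel(1) zero_complex.sel(1)
        zero_less_one one_complex.sel(1) order.asym)
  have hol: "g holomorphic_on ball 0 1"
    unfolding g_def using f nz by (intro holomorphic_intros) (auto simp: carath_class_def)
  have g0: "g 0 = 0" using f by (simp add: g_def carath_class_def)
  have "cmod (g x) < 1" if "cmod x < 1" for x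
  proof -
    have "(cmod (f x - 1))\<^sup>2 < (cmod (f x + 1))\<^sup>2"
      using Re[OF that] unfolding cmod_power2 by (simp add: power2_eq_square algebra_simps)
    then have "cmod (f x - 1) < cmod (f x + 1)" by (simp add: power2_less_imp_less)
    then show ?thesis using nz[OF that] by (simp add: g_def norm_divide)
  qed
  then have "cmod (g z) \<le> cmod z" using Schwarz_Lemma(1)[OF hol g0 _ z] by simp
  moreover have "f z = ell (g z)"
  proof -
    have "1 + g z = 2 * f z / (f z + 1)" "1 - g z = 2 / (f z + 1)"
      using nz[OF z] by (simp_all add: g_def field_simps)
    then show ?thesis using nz[OF z] by (simp add: ell_def)
  qed
  ultimately show thesis by (rule that)
qed

lemma Re_ell_mult_ell_pos_if_norm_le:
  assumes w: "cmod w < 1" and p: "cmod p < 1" and u: "cmod u \<le> cmod p"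
    and cond: "4 * cmod p * \<bar>Im w\<bar> < (1 - (cmod w)\<^sup>2) * (1 - (cmod p)\<^sup>2)"
  shows "Re (ell w * ell u) > 0"
proof -
  have "Im w * Im u \<le> \<bar>Im w\<bar> * \<bar>Im u\<bar>" by (simp add: abs_mult[symmetric])
  also have "\<dots> \<le> \<bar>Im w\<bar> * cmod p"
    using abs_Im_le_cmod[of u] u by (intro mult_left_mono) auto
  finally have "4 * Im w * Im u \<le> 4 * cmod p * \<bar>Im w\<bar>" by (simp add: mult.commute)
  moreover have "(1 - (cmod w)\<^sup>2) * (1 - (cmod p)\<^sup>2) \<le> (1 - (cmod w)\<^sup>2) * (1 - (cmod u)\<^sup>2)"
    using w u by (intro mult_left_mono power_mono) (auto simp: power_le_one)
  ultimately show ?thesis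
    using cond Re_ell_mult_ell_pos_iff[OF w] u p by simp
qed

lemma norm_cond_if_Re_ell_mult_ell_lam_pos:
  assumes w: "cmod w < 1" and p: "cmod p < 1"
    and pos: "\<And>lam. cmod lam = 1 \<Longrightarrow> Re (ell w * ell_lam lam p) > 0"
  shows "4 * cmod p * \<bar>Im w\<bar> < (1 - (cmod w)\<^sup>2) * (1 - (cmod p)\<^sup>2)"
proof (cases "p = 0")
  case True
  then show ?thesis using w by (simp add: power_less_one_iff)
next
  case False
  define u where "u = (if Im w \<ge> 0 then \<i> else - \<i>) * complex_of_real (cmod p)"
  have cu: "cmod u = cmod p" by (simp add: u_def norm_mult)
  have "Re (ell w * ell_lam (u / p) p) > 0"
    using pos False cu by (simp add: norm_divide)
  then have "Re (ell w * ell u) > 0" using False by (simp add: ell_lam_eq_ell)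
  then have "4 * Im w * Im u < (1 - (cmod w)\<^sup>2) * (1 - (cmod u)\<^sup>2)"
    using Re_ell_mult_ell_pos_iff[OF w] cu p by simp
  moreover have "Im w * Im u = \<bar>Im w\<bar> * cmod p" by (simp add: u_def)
  ultimately show ?thesis using cu by (simp add: mult.commute mult.left_commute)
qed

lemma abs_Arg_eq_arctan: "Re z > 0 \<Longrightarrow> \<bar>Arg z\<bar> = arctan \<bar>Im z / Re z\<bar>"
  using arg_conv_arctan[of z] by (simp add: abs_if arctan_minus)

lemma arctan_less_pi_half_minus_arctan_iff:
  fixes a x :: real
  assumes "0 \<le> a"
  shows "arctan x < pi / 2 - arctan a \<longleftrightarrow> a * x < 1"
proof (cases "a = 0")
  case True
  then show ?thesis using arctan_ubound[of x] by simp
next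
  case False
  with assms have "pi / 2 - arctan a = arctan (1 / a)"
    using arctan_inverse[of a] by (simp add: inverse_eq_divide)
  with assms False show ?thesis
    by (simp add: arctan_less_iff pos_less_divide_eq mult.commute)
qed

lemma arcsin_eq_arctan_double:
  fixes r :: real
  assumes "0 \<le> r" "r < 1"
  shows "arcsin (2 * r / (1 + r\<^sup>2)) = arctan (2 * r / (1 - r\<^sup>2))"
proof -
  define x where "x = 2 * r / (1 + r\<^sup>2)"
  have r2: "r\<^sup>2 < 1" using assms by (simp add: power_less_one_iff)
  have p: "1 + r\<^sup>2 > 0" by (simp add: add_pos_nonneg)
  have "0 < (1 - r)\<^sup>2" using assms by simp
  then have "2 * r < 1 + r\<^sup>2" by (simp add: power2_diff)
  then have x: "0 \<le> x" "x < 1" using assms p by (simp_all add: x_def)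
  have "1 - x\<^sup>2 = ((1 + r\<^sup>2)\<^sup>2 - (2 * r)\<^sup>2) / (1 + r\<^sup>2)\<^sup>2"
    using p unfolding x_def power_divide by (simp add: diff_divide_distrib)
  also have "\<dots> = ((1 - r\<^sup>2) / (1 + r\<^sup>2))\<^sup>2"
    by (simp add: power_divide power2_eq_square algebra_simps)
  finally have "sqrt (1 - x\<^sup>2) = (1 - r\<^sup>2) / (1 + r\<^sup>2)" using r2 p by simp
  then have quot: "x / sqrt (1 - x\<^sup>2) = 2 * r / (1 - r\<^sup>2)" using p by (simp add: x_def)
  have "arcsin x = arctan (x / sqrt (1 - x\<^sup>2))" by (rule arcsin_arctan) (use x in auto)
  also have "\<dots> = arctan (2 * r / (1 - r\<^sup>2))" by (simp only: quot)
  finally show ?thesis unfolding x_def .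
qed

lemma pi_half_minus_arctan_double:
  fixes r :: real
  assumes "0 < r" "r < 1"
  shows "pi / 2 - arctan (2 * r / (1 - r\<^sup>2)) = arctan ((1 - r\<^sup>2) / (2 * r))"
proof -
  have "0 < 2 * r / (1 - r\<^sup>2)" using assms by (simp add: power_less_one_iff)
  from arctan_inverse[OF this] show ?thesis by (simp add: inverse_eq_divide)
qed

lemma norm_cond_iff_Im_div_Re_ell:
  assumes "cmod w < 1" "0 \<le> r" "F = ell w"
  shows "4 * r * \<bar>Im w\<bar> < (1 - (cmod w)\<^sup>2) * (1 - r\<^sup>2)
           \<longleftrightarrow> 2 * r * \<bar>Im F / Re F\<bar> < 1 - r\<^sup>2"
proof -
  have pos: "1 - (cmod w)\<^sup>2 > 0" using assms by (simp add: power_less_one_iff)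
  then have "2 * r * \<bar>Im (ell w) / Re (ell w)\<bar> = 4 * r * \<bar>Im w\<bar> / (1 - (cmod w)\<^sup>2)"
    using assms by (simp add: Im_div_Re_ell abs_mult abs_divide)
  with pos show ?thesis using assms(3) by (simp add: pos_divide_less_eq mult.commute)
qed

lemma abs_Arg_less_iff:
  fixes F :: complex and r :: real
  assumes "Re F > 0" "0 \<le> r" "r < 1"
  shows "\<bar>Arg F\<bar> < pi / 2 - arcsin (2 * r / (1 + r\<^sup>2))
           \<longleftrightarrow> 2 * r * \<bar>Im F / Re F\<bar> < 1 - r\<^sup>2"
proof -
  define q where "q = \<bar>Im F / Re F\<bar>"
  have pos: "1 - r\<^sup>2 > 0" using assms by (simp add: power_less_one_iff)
  have "\<bar>Arg F\<bar> < pi / 2 - arcsin (2 * r / (1 + r\<^sup>2)) \<longleftrightarrow> 2 * r / (1 - r\<^sup>2) * q < 1"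
    using assms pos unfolding q_def
    by (simp add: abs_Arg_eq_arctan arcsin_eq_arctan_double arctan_less_pi_half_minus_arctan_iff)
  also have "\<dots> \<longleftrightarrow> 2 * r * q < 1 - r\<^sup>2" using pos by (simp add: pos_divide_less_eq)
  finally show ?thesis unfolding q_def .
qed

lemma T_op_in_carath_class_if_norm_cond:
  assumes \<phi>: "schwarz_type \<phi>" and F: "F \<in> carath_class"
    and \<omega>: "\<omega> ` ball 0 1 \<subseteq> ball 0 1" and F_eq: "\<forall>z\<in>ball 0 1. F z = ell (\<omega> z)"
    and cond: "\<forall>z\<in>ball 0 1. 4 * cmod (\<phi> z) * \<bar>Im (\<omega> z)\<bar>
                  < (1 - (cmod (\<omega> z))\<^sup>2) * (1 - (cmod (\<phi> z))\<^sup>2)"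
    and f: "f \<in> carath_class"
  shows "T_op F \<phi> f \<in> carath_class"
proof -
  have \<phi>_hol: "\<phi> holomorphic_on ball 0 1" and \<phi>_maps: "\<phi> ` ball 0 1 \<subseteq> ball 0 1"
    using \<phi> by (simp_all add: schwarz_type_def)
  have "f \<circ> \<phi> holomorphic_on ball 0 1"
    using f \<phi>_hol \<phi>_maps by (intro holomorphic_on_compose_gen) (auto simp: carath_class_def)
  then have "T_op F \<phi> f holomorphic_on ball 0 1"
    using F unfolding T_op_def carath_class_def o_def by (intro holomorphic_intros) auto
  moreover have "T_op F \<phi> f 0 = 1"
    using F f \<phi> by (simp add: T_op_def carath_class_def schwarz_type_def)
  moreover have "Re (T_op F \<phi> f z) > 0" if z: "z \<in> ball 0 1" for z
  proof -
    have "cmod (\<phi> z) < 1" "cmod (\<omega> z) < 1" using z \<phi>_maps \<omega> by (auto simp: image_subset_iff)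
    moreover obtain u where "cmod u \<le> cmod (\<phi> z)" "f (\<phi> z) = ell u"
      using carath_class_obtain_ell_norm_le[OF f \<open>cmod (\<phi> z) < 1\<close>] .
    ultimately show ?thesis
      using Re_ell_mult_ell_pos_if_norm_le[of "\<omega> z" "\<phi> z" u] cond F_eq z
      by (simp add: T_op_def)
  qed
  ultimately show ?thesis by (simp add: carath_class_def)
qed

lemma norm_cond_if_T_op_ell_lam_in_carath_class:
  assumes z: "z \<in> ball 0 1" and "cmod (\<phi> z) < 1" "cmod (\<omega> z) < 1" and F_eq: "F z = ell (\<omega> z)"
    and T_op: "\<forall>lam. cmod lam = 1 \<longrightarrow> T_op F \<phi> (ell_lam lam) \<in> carath_class"
  shows "4 * cmod (\<phi> z) * \<bar>Im (\<omega> z)\<bar> < (1 - (cmod (\<omega> z))\<^sup>2) * (1 - (cmod (\<phi> z))\<^sup>2)"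
proof (rule norm_cond_if_Re_ell_mult_ell_lam_pos)
  fix lam :: complex
  assume "cmod lam = 1"
  then have "Re (T_op F \<phi> (ell_lam lam) z) > 0" using T_op z unfolding carath_class_def by blast
  then show "Re (ell (\<omega> z) * ell_lam lam (\<phi> z)) > 0" by (simp only: T_op_def F_eq)
qed fact+

theorem theorem2p2:
  fixes \<phi> F \<omega> :: "complex \<Rightarrow> complex"
  assumes "schwarz_type \<phi>"
    and "F \<in> carath_class"
    and "schwarz_type \<omega>"
    and "\<forall>z\<in>ball 0 1. F z = ell (\<omega> z)"
  shows "((\<forall>f\<in>carath_class. T_op F \<phi> f \<in> carath_class) \<longleftrightarrow>
           (\<forall>lam. cmod lam = 1 \<longrightarrow> T_op F \<phi> (ell_lam lam) \<in> carath_class))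
       \<and> ((\<forall>lam. cmod lam = 1 \<longrightarrow> T_op F \<phi> (ell_lam lam) \<in> carath_class) \<longleftrightarrow>
           (\<forall>z\<in>ball 0 1. 4 * cmod (\<phi> z) * \<bar>Im (\<omega> z)\<bar>
                < (1 - (cmod (\<omega> z))\<^sup>2) * (1 - (cmod (\<phi> z))\<^sup>2)))
       \<and> ((\<forall>z\<in>ball 0 1. 4 * cmod (\<phi> z) * \<bar>Im (\<omega> z)\<bar>
                < (1 - (cmod (\<omega> z))\<^sup>2) * (1 - (cmod (\<phi> z))\<^sup>2)) \<longleftrightarrow>
           (\<forall>z\<in>ball 0 1. 2 * cmod (\<phi> z) * \<bar>Im (F z) / Re (F z)\<bar> < 1 - (cmod (\<phi> z))\<^sup>2))
       \<and> ((\<forall>z\<in>ball 0 1. 4 * cmod (\<phi> z) * \<bar>Im (\<omega> z)\<bar>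
                < (1 - (cmod (\<omega> z))\<^sup>2) * (1 - (cmod (\<phi> z))\<^sup>2)) \<longleftrightarrow>
           (\<forall>z\<in>ball 0 1. \<bar>Arg (F z)\<bar>
                < pi / 2 - arcsin (2 * cmod (\<phi> z) / (1 + (cmod (\<phi> z))\<^sup>2))))
       \<and> (\<forall>z\<in>ball 0 1.
            pi / 2 - arcsin (2 * cmod (\<phi> z) / (1 + (cmod (\<phi> z))\<^sup>2))
              = pi / 2 - arctan (2 * cmod (\<phi> z) / (1 - (cmod (\<phi> z))\<^sup>2))
          \<and> pi / 2 - arctan (2 * cmod (\<phi> z) / (1 - (cmod (\<phi> z))\<^sup>2))
              = (if \<phi> z = 0 then pi / 2
                 else arctan ((1 - (cmod (\<phi> z))\<^sup>2) / (2 * cmod (\<phi> z)))))"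
proof -
  have \<omega>_maps: "\<omega> ` ball 0 1 \<subseteq> ball 0 1" using assms(3) by (simp add: schwarz_type_def)
  have \<phi>z: "cmod (\<phi> z) < 1" and \<omega>z: "cmod (\<omega> z) < 1" and ReF: "Re (F z) > 0"
    if "z \<in> ball 0 1" for z
    using that assms \<omega>_maps by (auto simp: schwarz_type_def carath_class_def image_subset_iff)
  have F_eq: "F z = ell (\<omega> z)" if "z \<in> ball 0 1" for z using assms(4) that by blast
  note A_imp_B = ell_lam_in_carath_class
    and B_imp_C = norm_cond_if_T_op_ell_lam_in_carath_class[where \<phi>=\<phi> and \<omega>=\<omega> and F=F,
      OF _ \<phi>z \<omega>z F_eq]
    and C_imp_A = T_op_in_carath_class_if_norm_cond[OF assms(1,2) \<omega>_maps assms(4)]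
    and C_iff_C' = norm_cond_iff_Im_div_Re_ell[OF \<omega>z norm_ge_zero F_eq]
    and D_iff_C' = abs_Arg_less_iff[OF ReF norm_ge_zero \<phi>z]
  have T: "pi / 2 - arctan (2 * cmod (\<phi> z) / (1 - (cmod (\<phi> z))\<^sup>2))
              = (if \<phi> z = 0 then pi / 2 else arctan ((1 - (cmod (\<phi> z))\<^sup>2) / (2 * cmod (\<phi> z))))"
    if "z \<in> ball 0 1" for z
    using pi_half_minus_arctan_double[OF _ \<phi>z[OF that]] by simp
  show ?thesis
    using arcsin_eq_arctan_double[OF norm_ge_zero \<phi>z] T
    apply (intro conjI)
    subgoal by (meson A_imp_B B_imp_C C_imp_A)
    subgoal by (meson A_imp_B B_imp_C C_imp_A)
    subgoal using C_iff_C' by blast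
    subgoal using C_iff_C' D_iff_C' by blast
    subgoal by simp
    done
qed

end
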